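(* Let $(X,d)$ be a compact doubling metric space with $\operatorname{diam}(X,d)=1/2$ and $\mathcal S$ a hyperbolic filling with parameters $a\ge\lambda\ge6$. Let $\rho:\mathcal S\to(0,\infty)$ satisfy (H1) and (H4) (exponent $p$). Let $C>1$, let $\mu_k$ be a $(C,\pi)$-balanced probability mass function on $\mathcal S_k$, and let $f_0:\mathcal S_{k+1}\to(0,1]$ be a probability mass function such that $(\mu_k,f_0)$ is $(C,\pi)$-compatible. Let $e=\{w_1,w_1'\}$ be a horizontal edge in $\mathcal S_{k+1}$ on which $f_0$ is $(C,\pi)$-unbalanced. If $e'=\{w,w'\}$ is a horizontal edge in $\mathcal S_{k+1}$ on which $f_0$ is $(C,\pi)$-balanced, then $B^e_{k+1}(f_0)$ is also $(C,\pi)$-balanced on $e'$.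
   Context: Hyperbolic filling: $X_0\subset X_1\subset\cdots$ increasing, $X_n$ maximal $a^{-n}$-separated in $X$ ($X_0=\{x_0\}$); $\mathcal S_n=\{(x,n):x\in X_n\}$, $\mathcal S=\bigcup_n\mathcal S_n$, $v_0=(x_0,0)$. Each $(x,n)$, $n\ge1$, has a fixed parent $(y,n-1)$ with $d(x,y)=\min_{z\in X_{n-1}}d(x,z)$; $\mathcal D_n(v)$ = descendants of $v$ in $\mathcal S_n$; genealogy $g(v)=(v_0,\dots,v_k=v)$. $D_2$: graph distance for the graph with edges vertex–parent and horizontal edges between distinct $(x,n),(y,n)$ with $B(x,\lambda a^{-n})\cap B(y,\lambda a^{-n})\ne\emptyset$. $\pi(v)=\prod_{w\in g(v)}\rho(w)$. (H1) $0<\eta_-\le\rho\le\eta_+<1$. (H4) $\sum_{w\in\mathcal D_n(v)}\pi(w)^p\le\pi(v)^p$ for all $v\in\mathcal S_m$, $n>m$. $f:\mathcal S_k\to(0,\infty)$ is $(C,\pi)$-balanced if $f(u)/\pi(u)^p\le C^2f(v)/\pi(v)^p$ for all $u,v\in\mathcal S_k$ with $D_2(u,v)=1$; it is $(C,\pi)$-balanced on an edge $\{u,v\}$ if $C^{-2}f(v)/\pi(v)^p\le f(u)/\pi(u)^p\le C^2f(v)/\pi(v)^p$, and $(C,\pi)$-unbalanced on it otherwise. $(f_0,f_1)$ is $(C,\pi)$-compatible if $f_0(u)/\pi(u)^p\le f_1(v)/\pi(v)^p\le Cf_0(u)/\pi(u)^p$ whenever $u$ is the parent of $v$. Balancing operator: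 for a horizontal edge $e=\{u,v\}$ in $\mathcal S_j$ and $f:\mathcal S_j\to(0,\infty)$, $B^e_j(f)=f$ if $f$ is balanced on $e$; if $f(u)/\pi(u)^p>C^2f(v)/\pi(v)^p$, then $B^e_j(f)$ agrees with $f$ off $\{u,v\}$ and equals $f(u)-\alpha$ at $u$, $f(v)+\alpha$ at $v$, with $\alpha(C^2/\pi(v)^p+1/\pi(u)^p)=f(u)/\pi(u)^p-C^2f(v)/\pi(v)^p$; symmetrically if $f(v)/\pi(v)^p>C^2f(u)/\pi(u)^p$. *)

theory Defs
  imports "HOL-Analysis.Analysis"
begin

definition doubling_metric :: "'a set \<Rightarrow> ('a \<Rightarrow> 'a \<Rightarrow> real) \<Rightarrow> bool" where
  "doubling_metric X d \<longleftrightarrow> Metric_space X d \<and>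
     (\<exists>N::nat. \<forall>x\<in>X. \<forall>r>0. \<exists>F. finite F \<and> card F \<le> N \<and> F \<subseteq> X \<and>
        Metric_space.mball X d x r \<subseteq> (\<Union>y\<in>F. Metric_space.mball X d y (r/2)))"

definition mdiam :: "'a set \<Rightarrow> ('a \<Rightarrow> 'a \<Rightarrow> real) \<Rightarrow> real" where
  "mdiam X d = Sup {d x y | x y. x \<in> X \<and> y \<in> X}"

definition separated :: "'a set \<Rightarrow> ('a \<Rightarrow> 'a \<Rightarrow> real) \<Rightarrow> real \<Rightarrow> 'a set \<Rightarrow> bool" where
  "separated X d r A \<longleftrightarrow> A \<subseteq> X \<and> (\<forall>x\<in>A. \<forall>y\<in>A. x \<noteq> y \<longrightarrow> r \<le> d x y)"

definition maximal_separated :: "'a set \<Rightarrow> ('a \<Rightarrow> 'a \<Rightarrow> real) \<Rightarrow> real \<Rightarrow> 'a set \<Rightarrow> bool" where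
  "maximal_separated X d r A \<longleftrightarrow> separated X d r A \<and>
     (\<forall>B. separated X d r B \<and> A \<subseteq> B \<longrightarrow> B = A)"

definition level :: "(nat \<Rightarrow> 'a set) \<Rightarrow> nat \<Rightarrow> ('a \<times> nat) set" where
  "level Xs n = {(x, n) | x. x \<in> Xs n}"

definition vertices :: "(nat \<Rightarrow> 'a set) \<Rightarrow> ('a \<times> nat) set" where
  "vertices Xs = (\<Union>n. level Xs n)"

definition hyperbolic_filling ::
  "'a set \<Rightarrow> ('a \<Rightarrow> 'a \<Rightarrow> real) \<Rightarrow> real \<Rightarrow> real \<Rightarrow> 'a \<Rightarrow> (nat \<Rightarrow> 'a set)
     \<Rightarrow> ('a \<times> nat \<Rightarrow> 'a \<times> nat) \<Rightarrow> bool" where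
  "hyperbolic_filling X d a lam x0 Xs par \<longleftrightarrow>
     a \<ge> lam \<and> lam \<ge> 6 \<and>
     Xs 0 = {x0} \<and> x0 \<in> X \<and>
     (\<forall>n. Xs n \<subseteq> Xs (Suc n)) \<and>
     (\<forall>n. maximal_separated X d (a powr (- real n)) (Xs n)) \<and>
     (\<forall>n. \<forall>x\<in>Xs (Suc n). \<exists>y. par (x, Suc n) = (y, n) \<and> y \<in> Xs n \<and>
          (\<forall>z\<in>Xs n. d x y \<le> d x z))"

definition filling_pi ::
  "('a \<times> nat \<Rightarrow> 'a \<times> nat) \<Rightarrow> ('a \<times> nat \<Rightarrow> real) \<Rightarrow> 'a \<times> nat \<Rightarrow> real" where
  "filling_pi par rho v = (\<Prod>i\<in>{0..snd v}. rho ((par ^^ i) v))"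

definition descendants ::
  "(nat \<Rightarrow> 'a set) \<Rightarrow> ('a \<times> nat \<Rightarrow> 'a \<times> nat) \<Rightarrow> nat \<Rightarrow> 'a \<times> nat \<Rightarrow> ('a \<times> nat) set" where
  "descendants Xs par n v = {w \<in> level Xs n. n \<ge> snd v \<and> (par ^^ (n - snd v)) w = v}"

definition horizontal_edge ::
  "'a set \<Rightarrow> ('a \<Rightarrow> 'a \<Rightarrow> real) \<Rightarrow> real \<Rightarrow> real \<Rightarrow> (nat \<Rightarrow> 'a set)
     \<Rightarrow> 'a \<times> nat \<Rightarrow> 'a \<times> nat \<Rightarrow> bool" where
  "horizontal_edge X d a lam Xs u v \<longleftrightarrow>
     (\<exists>n x y. u = (x, n) \<and> v = (y, n) \<and> x \<in> Xs n \<and> y \<in> Xs n \<and> x \<noteq> y \<and>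
        Metric_space.mball X d x (lam * a powr (- real n)) \<inter>
        Metric_space.mball X d y (lam * a powr (- real n)) \<noteq> {})"

definition filling_adj ::
  "'a set \<Rightarrow> ('a \<Rightarrow> 'a \<Rightarrow> real) \<Rightarrow> real \<Rightarrow> real \<Rightarrow> (nat \<Rightarrow> 'a set)
     \<Rightarrow> ('a \<times> nat \<Rightarrow> 'a \<times> nat) \<Rightarrow> 'a \<times> nat \<Rightarrow> 'a \<times> nat \<Rightarrow> bool" where
  "filling_adj X d a lam Xs par u v \<longleftrightarrow>
     u \<in> vertices Xs \<and> v \<in> vertices Xs \<and> u \<noteq> v \<and>
     ((snd u > 0 \<and> par u = v) \<or> (snd v > 0 \<and> par v = u) \<or>
      horizontal_edge X d a lam Xs u v)"

definition H1 :: "(nat \<Rightarrow> 'a set) \<Rightarrow> ('a \<times> nat \<Rightarrow> real) \<Rightarrow> bool" where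
  "H1 Xs rho \<longleftrightarrow> (\<exists>eta_minus eta_plus. 0 < eta_minus \<and> eta_minus \<le> eta_plus \<and> eta_plus < 1 \<and>
      (\<forall>v\<in>vertices Xs. eta_minus \<le> rho v \<and> rho v \<le> eta_plus))"

definition H4 :: "(nat \<Rightarrow> 'a set) \<Rightarrow> ('a \<times> nat \<Rightarrow> 'a \<times> nat) \<Rightarrow> ('a \<times> nat \<Rightarrow> real) \<Rightarrow> real \<Rightarrow> bool" where
  "H4 Xs par rho p \<longleftrightarrow> (\<forall>m n. \<forall>v\<in>level Xs m. n > m \<longrightarrow>
      (\<Sum>w\<in>descendants Xs par n v. filling_pi par rho w powr p) \<le> filling_pi par rho v powr p)"

text \<open>Here P w stands for pi(w)^p.\<close>

definition balanced_on_edge :: "real \<Rightarrow> ('b \<Rightarrow> real) \<Rightarrow> ('b \<Rightarrow> real) \<Rightarrow> 'b \<Rightarrow> 'b \<Rightarrow> bool" where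
  "balanced_on_edge C P f u v \<longleftrightarrow>
     (f v / P v) / C\<^sup>2 \<le> f u / P u \<and> f u / P u \<le> C\<^sup>2 * (f v / P v)"

definition balancing_op :: "real \<Rightarrow> ('b \<Rightarrow> real) \<Rightarrow> 'b \<Rightarrow> 'b \<Rightarrow> ('b \<Rightarrow> real) \<Rightarrow> 'b \<Rightarrow> real" where
  "balancing_op C P u v f =
     (if f u / P u > C\<^sup>2 * (f v / P v) then
        (let \<alpha> = (f u / P u - C\<^sup>2 * (f v / P v)) / (C\<^sup>2 / P v + 1 / P u)
         in f(u := f u - \<alpha>, v := f v + \<alpha>))
      else if f v / P v > C\<^sup>2 * (f u / P u) then
        (let \<alpha> = (f v / P v - C\<^sup>2 * (f u / P u)) / (C\<^sup>2 / P u + 1 / P v)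
         in f(v := f v - \<alpha>, u := f u + \<alpha>))
      else f)"

definition balanced_level ::
  "'a set \<Rightarrow> ('a \<Rightarrow> 'a \<Rightarrow> real) \<Rightarrow> real \<Rightarrow> real \<Rightarrow> (nat \<Rightarrow> 'a set)
     \<Rightarrow> ('a \<times> nat \<Rightarrow> 'a \<times> nat) \<Rightarrow> real \<Rightarrow> ('a \<times> nat \<Rightarrow> real) \<Rightarrow> nat
     \<Rightarrow> ('a \<times> nat \<Rightarrow> real) \<Rightarrow> bool" where
  "balanced_level X d a lam Xs par C P k f \<longleftrightarrow>
     (\<forall>u\<in>level Xs k. 0 < f u) \<and>
     (\<forall>u\<in>level Xs k. \<forall>v\<in>level Xs k. filling_adj X d a lam Xs par u v \<longrightarrow>
        f u / P u \<le> C\<^sup>2 * (f v / P v))"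

definition compatible ::
  "(nat \<Rightarrow> 'a set) \<Rightarrow> ('a \<times> nat \<Rightarrow> 'a \<times> nat) \<Rightarrow> real \<Rightarrow> ('a \<times> nat \<Rightarrow> real) \<Rightarrow> nat
     \<Rightarrow> ('a \<times> nat \<Rightarrow> real) \<Rightarrow> ('a \<times> nat \<Rightarrow> real) \<Rightarrow> bool" where
  "compatible Xs par C P k f0 f1 \<longleftrightarrow>
     (\<forall>v\<in>level Xs (Suc k). f0 (par v) / P (par v) \<le> f1 v / P v \<and>
         f1 v / P v \<le> C * (f0 (par v) / P (par v)))"

definition prob_mass :: "('b \<Rightarrow> real) \<Rightarrow> 'b set \<Rightarrow> bool" where
  "prob_mass f S \<longleftrightarrow> (\<forall>v\<in>S. 0 < f v) \<and> (\<Sum>v\<in>S. f v) = 1"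

end

theory Submission
  imports Defs
begin

(* Write R = f / pi^p for the density of a mass function f. Balancing an unbalanced edge
   {u, v} with R u > C^2 R v moves mass from u to v until R u = C^2 R v, so R only
   decreases at u, only increases at v and is unchanged elsewhere. An edge disjoint from
   {u, v} is untouched, the edge {u, v} itself becomes balanced, and for an edge sharing
   one endpoint with {u, v} it suffices that R varies by at most C^4 among the vertices
   involved. These vertices are 4 lambda a^-(k+1)-close, so their parents coincide or are
   adjacent at level k; compatibility with the balanced mu_k then bounds the variation of
   R by C * C^2 = C^3. *)

lemma balanced_on_edge_iff:
  assumes "C \<noteq> 0"
  shows "balanced_on_edge C P f x y \<longleftrightarrow>
    f y / P y \<le> C\<^sup>2 * (f x / P x) \<and> f x / P x \<le> C\<^sup>2 * (f y / P y)"
proof -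
  have "C\<^sup>2 > 0" using assms by simp
  then show ?thesis
    unfolding balanced_on_edge_def pos_divide_le_eq[OF \<open>C\<^sup>2 > 0\<close>] by (simp add: mult.commute)
qed

lemma transfer_preserves_balance:
  fixes R G :: "'b \<Rightarrow> real" and c :: real
  assumes c: "c \<ge> 1" and Rv: "R v \<ge> 0"
    and Gu: "G u \<le> R u" and Gv: "R v \<le> G v" and Guv: "G u = c * G v"
    and off: "\<And>z. z \<noteq> u \<Longrightarrow> z \<noteq> v \<Longrightarrow> G z = R z"
    and ww: "w \<noteq> w'"
    and bal: "R w \<le> c * R w'" "R w' \<le> c * R w"
    and near: "{w, w'} \<inter> {u, v} \<noteq> {} \<Longrightarrow>
      \<forall>x\<in>{u, v, w, w'}. \<forall>y\<in>{u, v, w, w'}. R x \<le> c\<^sup>2 * R y"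
  shows "G w \<le> c * G w' \<and> G w' \<le> c * G w"
proof -
  have Gv_nonneg: "G v \<ge> 0" using Rv Gv by linarith
  have grow: "x \<le> c * x" if "x \<ge> 0" for x
    using mult_right_mono[OF c that] by simp
  have edge_uv: "G u \<le> c * G v \<and> G v \<le> c * G u"
  proof
    show "G u \<le> c * G v" using Guv by simp
    have "G u \<ge> 0" using Guv c Gv_nonneg by simp
    then show "G v \<le> c * G u" using grow[OF Gv_nonneg] grow[of "G u"] Guv by linarith
  qed
  have edge_u: "G u \<le> c * G z \<and> G z \<le> c * G u"
    if "z \<noteq> u" "z \<noteq> v" "R u \<le> c * R z" "R z \<le> c\<^sup>2 * R v" for z
  proof
    show "G u \<le> c * G z" using Gu that off by simp
    have "c\<^sup>2 * R v \<le> c\<^sup>2 * G v" by (rule mult_left_mono[OF Gv]) simp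
    then have "R z \<le> c * (c * G v)" using that(4) by (simp add: power2_eq_square)
    then show "G z \<le> c * G u" using off that Guv by simp
  qed
  have edge_v: "G v \<le> c * G z \<and> G z \<le> c * G v"
    if "z \<noteq> u" "z \<noteq> v" "R z \<le> c * R v" "R u \<le> c\<^sup>2 * R z" for z
  proof
    have "c * G v \<le> c * (c * R z)"
      using Guv Gu that(4) by (simp add: power2_eq_square)
    then show "G v \<le> c * G z" using off that c by simp
    show "G z \<le> c * G v" using off that Gv c by (simp add: order_trans mult_left_mono)
  qed
  show ?thesis
  proof (cases "{w, w'} \<inter> {u, v} = {}")
    case True
    then have "G w = R w" "G w' = R w'" using off by auto
    then show ?thesis using bal by simp
  next
    case False
    note near = near[OF False]
    consider "w = u" "w' = v" | "w = v" "w' = u" | "w = u" "w' \<noteq> u" "w' \<noteq> v"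
      | "w = v" "w' \<noteq> u" "w' \<noteq> v" | "w' = u" "w \<noteq> u" "w \<noteq> v"
      | "w' = v" "w \<noteq> u" "w \<noteq> v"
      using False ww by blast
    then show ?thesis
    proof cases
      case 3 then show ?thesis using edge_u[of w'] bal near by simp
    next
      case 4 then show ?thesis using edge_v[of w'] bal near by simp
    next
      case 5 then show ?thesis using edge_u[of w] bal near by simp
    next
      case 6 then show ?thesis using edge_v[of w] bal near by simp
    qed (use edge_uv in auto)
  qed
qed

lemma balancing_op_transfer:
  fixes C :: real and P f :: "'b \<Rightarrow> real"
  assumes uv: "u \<noteq> v" and Pu: "P u > 0" and Pv: "P v > 0"
    and unbal: "f u / P u > C\<^sup>2 * (f v / P v)"
  defines "g \<equiv> balancing_op C P u v f"
  shows "\<And>z. z \<noteq> u \<Longrightarrow> z \<noteq> v \<Longrightarrow> g z = f z"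
    and "g u / P u \<le> f u / P u" and "f v / P v \<le> g v / P v"
    and "g u / P u = C\<^sup>2 * (g v / P v)"
proof -
  define \<alpha> where "\<alpha> = (f u / P u - C\<^sup>2 * (f v / P v)) / (C\<^sup>2 / P v + 1 / P u)"
  have den: "C\<^sup>2 / P v + 1 / P u > 0" using Pu Pv by (simp add: add_nonneg_pos)
  have \<alpha>_nonneg: "\<alpha> \<ge> 0" unfolding \<alpha>_def using unbal den by simp
  have g: "g = f(u := f u - \<alpha>, v := f v + \<alpha>)"
    using unbal unfolding g_def balancing_op_def \<alpha>_def Let_def by simp
  show "g z = f z" if "z \<noteq> u" "z \<noteq> v" for z using that g by simp
  show "g u / P u \<le> f u / P u" using g uv \<alpha>_nonneg Pu by (simp add: divide_right_mono)
  show "f v / P v \<le> g v / P v" using g \<alpha>_nonneg Pv by (simp add: divide_right_mono)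
  have "\<alpha> * (C\<^sup>2 / P v + 1 / P u) = f u / P u - C\<^sup>2 * (f v / P v)"
    unfolding \<alpha>_def using den by simp
  then show "g u / P u = C\<^sup>2 * (g v / P v)" using g uv Pu Pv by (simp add: field_simps)
qed

lemma balancing_op_swap:
  assumes "\<not> f u / P u > C\<^sup>2 * (f v / P v)"
  shows "balancing_op C P u v f = balancing_op C P v u f"
  using assms unfolding balancing_op_def by simp

lemma balancing_op_preserves_balance_directed:
  fixes C :: real and P f :: "'b \<Rightarrow> real"
  assumes C: "C \<ge> 1" and uv: "u \<noteq> v" and ww: "w \<noteq> w'"
    and Pu: "P u > 0" and Pv: "P v > 0" and fv: "f v \<ge> 0"
    and unbal: "f u / P u > C\<^sup>2 * (f v / P v)"
    and bal: "balanced_on_edge C P f w w'"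
    and near: "{w, w'} \<inter> {u, v} \<noteq> {} \<Longrightarrow>
      \<forall>x\<in>{u, v, w, w'}. \<forall>y\<in>{u, v, w, w'}. f x / P x \<le> C ^ 4 * (f y / P y)"
  shows "balanced_on_edge C P (balancing_op C P u v f) w w'"
proof -
  define g where "g = balancing_op C P u v f"
  note transfer = balancing_op_transfer[OF uv Pu Pv unbal, folded g_def]
  have "g w / P w \<le> C\<^sup>2 * (g w' / P w') \<and> g w' / P w' \<le> C\<^sup>2 * (g w / P w)"
  proof (rule transfer_preserves_balance[where R = "\<lambda>x. f x / P x" and u = u and v = v])
    show "1 \<le> C\<^sup>2" using C by (simp add: one_le_power)
    show "0 \<le> f v / P v" using fv Pv by simp
    show "\<forall>x\<in>{u, v, w, w'}. \<forall>y\<in>{u, v, w, w'}. f x / P x \<le> (C\<^sup>2)\<^sup>2 * (f y / P y)"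
      if "{w, w'} \<inter> {u, v} \<noteq> {}" using near[OF that] by (simp flip: power_mult)
    show "f w / P w \<le> C\<^sup>2 * (f w' / P w')" "f w' / P w' \<le> C\<^sup>2 * (f w / P w)"
      using bal C by (simp_all add: balanced_on_edge_iff)
  qed (use transfer ww in simp_all)
  then show ?thesis using C unfolding g_def by (simp add: balanced_on_edge_iff)
qed

lemma balancing_op_preserves_balance:
  fixes C :: real and P f :: "'b \<Rightarrow> real"
  assumes C: "C \<ge> 1" and uv: "u \<noteq> v" and ww: "w \<noteq> w'"
    and P: "P u > 0" "P v > 0" and f: "f u \<ge> 0" "f v \<ge> 0"
    and unbal: "\<not> balanced_on_edge C P f u v"
    and bal: "balanced_on_edge C P f w w'"
    and near: "{w, w'} \<inter> {u, v} \<noteq> {} \<Longrightarrow>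
      \<forall>x\<in>{u, v, w, w'}. \<forall>y\<in>{u, v, w, w'}. f x / P x \<le> C ^ 4 * (f y / P y)"
  shows "balanced_on_edge C P (balancing_op C P u v f) w w'"
proof (cases "f u / P u > C\<^sup>2 * (f v / P v)")
  case True
  then show ?thesis using balancing_op_preserves_balance_directed[OF C uv ww P f(2) _ bal near] by simp
next
  case False
  then have "f v / P v > C\<^sup>2 * (f u / P u)" using unbal C by (auto simp: balanced_on_edge_iff)
  moreover have "{v, u, w, w'} = {u, v, w, w'}" "{u, v} = {v, u}" by auto
  ultimately have "balanced_on_edge C P (balancing_op C P v u f) w w'"
    using balancing_op_preserves_balance_directed[OF C uv[symmetric] ww P(2,1) f(1) _ bal] near
    by metis
  then show ?thesis using balancing_op_swap[OF False] by simp
qed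

lemma hyperbolic_filling_subset:
  assumes "hyperbolic_filling X d a lam x0 Xs par"
  shows "Xs n \<subseteq> X"
  using assms unfolding hyperbolic_filling_def maximal_separated_def separated_def by blast

lemma hyperbolic_filling_parent:
  assumes X: "Metric_space X d" and f: "hyperbolic_filling X d a lam x0 Xs par"
    and x: "x \<in> Xs (Suc n)"
  obtains y where "par (x, Suc n) = (y, n)" "y \<in> Xs n" "d x y < a powr - real n"
proof -
  obtain y where y: "par (x, Suc n) = (y, n)" "y \<in> Xs n" "\<forall>z\<in>Xs n. d x y \<le> d x z"
    using f x unfolding hyperbolic_filling_def by blast
  have "d x y < a powr - real n"
  proof (rule ccontr)
    assume "\<not> ?thesis"
    then have far: "\<forall>z\<in>Xs n. a powr - real n \<le> d x z" using y(3) by force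
    have xX: "x \<in> X" using hyperbolic_filling_subset[OF f] x by blast
    have max: "maximal_separated X d (a powr - real n) (Xs n)"
      using f unfolding hyperbolic_filling_def by blast
    then have "separated X d (a powr - real n) (insert x (Xs n))"
      using far xX unfolding maximal_separated_def separated_def
      by (auto simp: Metric_space.commute[OF X])
    then have "x \<in> Xs n" using max unfolding maximal_separated_def by blast
    then have "a powr - real n \<le> d x x" using far by blast
    moreover have "d x x = 0" using Metric_space.zero[OF X xX xX] by simp
    moreover have "a > 0" using f unfolding hyperbolic_filling_def by linarith
    ultimately show False by simp
  qed
  with y that show ?thesis by blast
qed

lemma parent_in_level:
  assumes "hyperbolic_filling X d a lam x0 Xs par" "v \<in> level Xs (Suc n)"
  shows "par v \<in> level Xs n"
  using assms unfolding hyperbolic_filling_def level_def by force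

lemma ancestor_in_level:
  assumes f: "hyperbolic_filling X d a lam x0 Xs par" and v: "v \<in> level Xs n" and "i \<le> n"
  shows "(par ^^ i) v \<in> level Xs (n - i)"
  using \<open>i \<le> n\<close>
proof (induction i)
  case 0
  then show ?case using v by simp
next
  case (Suc i)
  then have "(par ^^ i) v \<in> level Xs (Suc (n - Suc i))" by (simp add: Suc_diff_Suc)
  then show ?case using parent_in_level[OF f] by simp
qed

lemma filling_pi_pos:
  assumes f: "hyperbolic_filling X d a lam x0 Xs par" and rho: "\<forall>v\<in>vertices Xs. 0 < rho v"
    and v: "v \<in> level Xs n"
  shows "filling_pi par rho v > 0"
  unfolding filling_pi_def
proof (rule prod_pos)
  fix i assume "i \<in> {0..snd v}"
  then have "i \<le> n" using v unfolding level_def by auto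
  then show "0 < rho ((par ^^ i) v)"
    using ancestor_in_level[OF f v] rho unfolding vertices_def by blast
qed

lemma horizontal_edge_dist:
  assumes X: "Metric_space X d" and e: "horizontal_edge X d a lam Xs u v"
  shows "u \<noteq> v" "snd v = snd u" "fst u \<in> X" "fst v \<in> X"
    and "d (fst u) (fst v) < 2 * (lam * a powr - real (snd u))"
proof -
  obtain n x y where uv: "u = (x, n)" "v = (y, n)" "x \<noteq> y"
    and balls: "Metric_space.mball X d x (lam * a powr - real n) \<inter>
      Metric_space.mball X d y (lam * a powr - real n) \<noteq> {}"
    using e unfolding horizontal_edge_def by blast
  then obtain z where z: "x \<in> X" "y \<in> X" "z \<in> X"
    "d x z < lam * a powr - real n" "d y z < lam * a powr - real n"
    using Metric_space.in_mball[OF X] by blast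
  show "u \<noteq> v" "snd v = snd u" "fst u \<in> X" "fst v \<in> X" using uv z by auto
  have "d x y \<le> d x z + d z y" using Metric_space.triangle[OF X] z by blast
  then show "d (fst u) (fst v) < 2 * (lam * a powr - real (snd u))"
    using uv z Metric_space.commute[OF X, of z y] by simp
qed

lemma horizontal_edges_meeting_close:
  assumes X: "Metric_space X d"
    and e: "horizontal_edge X d a lam Xs u v" and e': "horizontal_edge X d a lam Xs w w'"
    and meet: "{w, w'} \<inter> {u, v} \<noteq> {}"
    and st: "s \<in> {u, v, w, w'}" "t \<in> {u, v, w, w'}"
  shows "d (fst s) (fst t) < 4 * (lam * a powr - real (snd u))"
proof -
  define L where "L = 2 * (lam * a powr - real (snd u))"
  obtain z where z: "z \<in> {u, v}" "z \<in> {w, w'}" using meet by blast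
  note de = horizontal_edge_dist[OF X e] and de' = horizontal_edge_dist[OF X e']
  have "snd w = snd u" using z de(2) de'(2) by auto
  then have d_edges: "d (fst u) (fst v) < L" "d (fst w) (fst w') < L"
    using de(5) de'(5) unfolding L_def by simp_all
  have L_pos: "L > 0"
    using d_edges(1) Metric_space.nonneg[OF X, of "fst u" "fst v"] by linarith
  have inX: "fst r \<in> X" if "r \<in> {u, v, w, w'}" for r using that de de' by auto
  have from_z: "d (fst z) (fst r) < L" if "r \<in> {u, v, w, w'}" for r
  proof -
    have "d (fst r) (fst r) = 0" using inX[OF that] Metric_space.zero[OF X] by blast
    then show ?thesis using that z d_edges L_pos Metric_space.commute[OF X] by auto
  qed
  have "d (fst s) (fst t) \<le> d (fst s) (fst z) + d (fst z) (fst t)"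
    using Metric_space.triangle[OF X] inX st z by blast
  also have "\<dots> < 2 * L"
    using from_z[OF st(1)] from_z[OF st(2)] Metric_space.commute[OF X, of "fst s" "fst z"]
    by linarith
  finally show ?thesis unfolding L_def by simp
qed

lemma balanced_level_near_parents:
  assumes X: "Metric_space X d" and f: "hyperbolic_filling X d a lam x0 Xs par"
    and mu: "balanced_level X d a lam Xs par C P k mu"
    and P: "\<forall>v\<in>level Xs k. P v > 0" and C: "C \<ge> 1"
    and x: "x \<in> Xs (Suc k)" and y: "y \<in> Xs (Suc k)"
    and dxy: "d x y < 4 * (lam * a powr - real (Suc k))"
  shows "mu (par (x, Suc k)) / P (par (x, Suc k)) \<le> C\<^sup>2 * (mu (par (y, Suc k)) / P (par (y, Suc k)))"
proof -
  obtain p where p: "par (x, Suc k) = (p, k)" "p \<in> Xs k" "d x p < a powr - real k"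
    using hyperbolic_filling_parent[OF X f x] by blast
  obtain q where q: "par (y, Suc k) = (q, k)" "q \<in> Xs k" "d y q < a powr - real k"
    using hyperbolic_filling_parent[OF X f y] by blast
  have lam: "6 \<le> lam" "lam \<le> a" using f unfolding hyperbolic_filling_def by auto
  have inX: "p \<in> X" "q \<in> X" "x \<in> X" "y \<in> X"
    using p q x y hyperbolic_filling_subset[OF f] by blast+
  have "lam * a powr - real (Suc k) \<le> a powr - real k"
    using lam by (simp add: powr_diff powr_minus_divide field_simps)
  then have "d x y < 4 * a powr - real k" using dxy by linarith
  moreover have "d p q \<le> d p x + d x y + d y q"
    using Metric_space.triangle[OF X] inX by (smt (verit))
  moreover have "d p x = d x p" using Metric_space.commute[OF X] by blast
  ultimately have "d p q < 6 * a powr - real k" using p q by linarith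
  also have "\<dots> \<le> lam * a powr - real k" using lam by (simp add: mult_right_mono)
  finally have dpq: "d p q < lam * a powr - real k" .
  have lp: "(p, k) \<in> level Xs k" "(q, k) \<in> level Xs k" using p q unfolding level_def by auto
  show ?thesis
  proof (cases "p = q")
    case True
    have "mu (p, k) / P (p, k) > 0" using mu lp P unfolding balanced_level_def by auto
    moreover have "1 \<le> C\<^sup>2" using C by (simp add: one_le_power)
    ultimately have "1 * (mu (p, k) / P (p, k)) \<le> C\<^sup>2 * (mu (p, k) / P (p, k))"
      by (intro mult_right_mono) auto
    then show ?thesis using True p q by simp
  next
    case False
    have "d q q = 0" using Metric_space.zero[OF X] inX by blast
    then have "q \<in> Metric_space.mball X d p (lam * a powr - real k) \<inter>
        Metric_space.mball X d q (lam * a powr - real k)"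
      using Metric_space.in_mball[OF X] Metric_space.nonneg[OF X, of p q] inX dpq by auto
    then have "horizontal_edge X d a lam Xs (p, k) (q, k)"
      unfolding horizontal_edge_def using p q False by blast
    then have "filling_adj X d a lam Xs par (p, k) (q, k)"
      unfolding filling_adj_def vertices_def using lp False by blast
    then show ?thesis using mu lp p q unfolding balanced_level_def by auto
  qed
qed

lemma compatible_density_near:
  assumes X: "Metric_space X d" and f: "hyperbolic_filling X d a lam x0 Xs par"
    and mu: "balanced_level X d a lam Xs par C P k mu"
    and P: "\<forall>v\<in>level Xs k. P v > 0" and C: "C \<ge> 1"
    and compat: "compatible Xs par C P k mu g"
    and st: "s \<in> level Xs (Suc k)" "t \<in> level Xs (Suc k)"
    and dst: "d (fst s) (fst t) < 4 * (lam * a powr - real (Suc k))"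
  shows "g s / P s \<le> C ^ 3 * (g t / P t)"
proof -
  define M where "M v = mu v / P v" for v
  have s_t: "s = (fst s, Suc k)" "t = (fst t, Suc k)" "fst s \<in> Xs (Suc k)" "fst t \<in> Xs (Suc k)"
    using st unfolding level_def by auto
  have parents: "M (par s) \<le> C\<^sup>2 * M (par t)"
    using balanced_level_near_parents[OF X f mu P C s_t(3,4) dst] s_t(1,2) unfolding M_def by metis
  have "g s / P s \<le> C * M (par s)" "M (par t) \<le> g t / P t"
    using compat st unfolding compatible_def M_def by auto
  then have "g s / P s \<le> C * (C\<^sup>2 * (g t / P t))"
    using parents C by (smt (verit) mult_left_mono zero_le_power2)
  then show ?thesis by (simp add: power3_eq_cube power2_eq_square mult.assoc)
qed

lemma compatible_density_meeting_edges:
  assumes X: "Metric_space X d" and f: "hyperbolic_filling X d a lam x0 Xs par"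
    and mu: "balanced_level X d a lam Xs par C P k mu"
    and P: "\<forall>v\<in>level Xs k. P v > 0" and C: "C \<ge> 1"
    and compat: "compatible Xs par C P k mu g"
    and e: "horizontal_edge X d a lam Xs u v" and e': "horizontal_edge X d a lam Xs w w'"
    and level: "{u, v, w, w'} \<subseteq> level Xs (Suc k)"
    and meet: "{w, w'} \<inter> {u, v} \<noteq> {}"
    and st: "s \<in> {u, v, w, w'}" "t \<in> {u, v, w, w'}"
  shows "g s / P s \<le> C ^ 3 * (g t / P t)"
proof (rule compatible_density_near[OF X f mu P C compat])
  show "s \<in> level Xs (Suc k)" "t \<in> level Xs (Suc k)" using st level by auto
  have "snd u = Suc k" using level unfolding level_def by auto
  then show "d (fst s) (fst t) < 4 * (lam * a powr - real (Suc k))"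
    using horizontal_edges_meeting_close[OF X e e' meet st] by simp
qed

theorem lemma3p13:
  fixes X :: "'a set" and d :: "'a \<Rightarrow> 'a \<Rightarrow> real"
    and a lam p C :: real and x0 :: 'a and Xs :: "nat \<Rightarrow> 'a set"
    and par :: "'a \<times> nat \<Rightarrow> 'a \<times> nat" and rho :: "'a \<times> nat \<Rightarrow> real"
    and k :: nat and mu f0 :: "'a \<times> nat \<Rightarrow> real"
    and w1 w1' w w' :: "'a \<times> nat"
  assumes metric: "Metric_space X d"
    and compact: "compact_space (Metric_space.mtopology X d)"
    and doubling: "doubling_metric X d"
    and diam: "mdiam X d = 1/2"
    and filling: "hyperbolic_filling X d a lam x0 Xs par"
    and rho_pos: "\<forall>v\<in>vertices Xs. 0 < rho v"
    and H1: "H1 Xs rho"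
    and H4: "H4 Xs par rho p"
    and p_pos: "0 < p"
    and C: "C > 1"
    and mu_pmf: "prob_mass mu (level Xs k)"
    and mu_bal: "balanced_level X d a lam Xs par C (\<lambda>v. filling_pi par rho v powr p) k mu"
    and f0_pmf: "prob_mass f0 (level Xs (Suc k))"
    and f0_le1: "\<forall>v\<in>level Xs (Suc k). f0 v \<le> 1"
    and compat: "compatible Xs par C (\<lambda>v. filling_pi par rho v powr p) k mu f0"
    and e: "w1 \<in> level Xs (Suc k)" "w1' \<in> level Xs (Suc k)"
           "horizontal_edge X d a lam Xs w1 w1'"
    and unbal: "\<not> balanced_on_edge C (\<lambda>v. filling_pi par rho v powr p) f0 w1 w1'"
    and e': "w \<in> level Xs (Suc k)" "w' \<in> level Xs (Suc k)"
            "horizontal_edge X d a lam Xs w w'"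
    and bal: "balanced_on_edge C (\<lambda>v. filling_pi par rho v powr p) f0 w w'"
  shows "balanced_on_edge C (\<lambda>v. filling_pi par rho v powr p)
           (balancing_op C (\<lambda>v. filling_pi par rho v powr p) w1 w1' f0) w w'"
proof -
  define P where "P = (\<lambda>v. filling_pi par rho v powr p)"
  have P_pos: "P v > 0" if "v \<in> level Xs n" for v n
    using filling_pi_pos[OF filling rho_pos that] unfolding P_def by simp
  have f0_pos: "f0 v > 0" if "v \<in> level Xs (Suc k)" for v
    using f0_pmf that unfolding prob_mass_def by blast
  have C1: "C \<ge> 1" using C by simp
  have near: "f0 s / P s \<le> C ^ 4 * (f0 t / P t)"
    if meet: "{w, w'} \<inter> {w1, w1'} \<noteq> {}"
      and st: "s \<in> {w1, w1', w, w'}" "t \<in> {w1, w1', w, w'}" for s t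
  proof -
    have t: "t \<in> level Xs (Suc k)" using st e e' by auto
    have "f0 s / P s \<le> C ^ 3 * (f0 t / P t)"
      using compatible_density_meeting_edges[OF metric filling mu_bal[folded P_def] _ C1
          compat[folded P_def] e(3) e'(3) _ meet st] P_pos e e' by blast
    also have "\<dots> \<le> C ^ 4 * (f0 t / P t)"
      using C1 f0_pos[OF t] P_pos[OF t]
      by (intro mult_right_mono power_increasing) simp_all
    finally show ?thesis .
  qed
  have "balanced_on_edge C P (balancing_op C P w1 w1' f0) w w'"
  proof (rule balancing_op_preserves_balance[OF C1])
    show "w1 \<noteq> w1'" "w \<noteq> w'" using horizontal_edge_dist(1)[OF metric] e(3) e'(3) by blast+
    show "P w1 > 0" "P w1' > 0" "f0 w1 \<ge> 0" "f0 w1' \<ge> 0"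
      using P_pos[OF e(1)] P_pos[OF e(2)] f0_pos[OF e(1)] f0_pos[OF e(2)] by simp_all
  qed (use unbal bal near in \<open>simp_all add: P_def\<close>)
  then show ?thesis unfolding P_def .
qed

end
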